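(* Let $C=(V',E')$ be a finite connected undirected simple graph, and let $P$ be the set of BFS-trees of $C$, one with root $v$ for each $v\in V'$. Let $T_m\in P$, with root $r$, satisfy $S_d(T_m)=\min_{T\in P}S_d(T)$. Then $r$ is a centroid of $T_m$.
   Context: A BFS-tree of $C$ with root $v$ is the spanning tree constructed by a breadth-first search of $C$ starting at $v$ (visiting vertices level by level by distance from $v$, each non-root vertex attached to the vertex from which it was first discovered). For a rooted tree $T=(V_T,E_T)$ with root $r$, $d_T(x,y)$ is the number of edges on the path between $x$ and $y$ in $T$ and $S_d(T)=\sum_{x\in V_T}d_T(r,x)$. The vertex deviation of $v$ in $T$ is $m(v)=\frac{1}{|V_T|}\sum_{u\in V_T}d_T(v,u)$, and a centroid of $T$ is a vertex minimizing $m(v)$. *)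

theory Defs
  imports Complex_Main
begin

definition simple_graph :: "'a set \<Rightarrow> 'a set set \<Rightarrow> bool" where
  "simple_graph V E \<longleftrightarrow> finite V \<and>
     (\<forall>e\<in>E. \<exists>x y. x \<noteq> y \<and> e = {x, y} \<and> x \<in> V \<and> y \<in> V)"

fun walk :: "'a set set \<Rightarrow> 'a list \<Rightarrow> bool" where
  "walk E [] = False"
| "walk E [x] = True"
| "walk E (x # y # xs) = ({x, y} \<in> E \<and> walk E (y # xs))"

definition connected_graph :: "'a set \<Rightarrow> 'a set set \<Rightarrow> bool" where
  "connected_graph V E \<longleftrightarrow>
     (\<forall>x\<in>V. \<forall>y\<in>V. \<exists>xs. walk E xs \<and> hd xs = x \<and> last xs = y)"

definition gdist :: "'a set set \<Rightarrow> 'a \<Rightarrow> 'a \<Rightarrow> nat" where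
  "gdist E x y = (LEAST n. \<exists>xs. walk E xs \<and> hd xs = x \<and> last xs = y \<and> length xs = Suc n)"

text \<open>Breadth-first search as a nondeterministic process: state = queue, visited set,
  tree edges built so far.\<close>
inductive bfs_run :: "'a set set \<Rightarrow> 'a list \<Rightarrow> 'a set \<Rightarrow> 'a set set \<Rightarrow> 'a set set \<Rightarrow> bool"
  for E where
  finish: "bfs_run E [] vis T T"
| step: "\<lbrakk> set ns = {w. {u, w} \<in> E \<and> w \<notin> vis}; distinct ns;
          bfs_run E (q @ ns) (vis \<union> set ns) (T \<union> (\<lambda>w. {u, w}) ` set ns) T' \<rbrakk>
         \<Longrightarrow> bfs_run E (u # q) vis T T'"

definition bfs_tree :: "'a set \<Rightarrow> 'a set set \<Rightarrow> 'a \<Rightarrow> 'a set set \<Rightarrow> bool" where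
  "bfs_tree V E v T \<longleftrightarrow> v \<in> V \<and> bfs_run E [v] {v} {} T"

definition Sd :: "'a set \<Rightarrow> 'a set set \<Rightarrow> 'a \<Rightarrow> nat" where
  "Sd VT ET r = (\<Sum>x\<in>VT. gdist ET r x)"

definition vertex_deviation :: "'a set \<Rightarrow> 'a set set \<Rightarrow> 'a \<Rightarrow> real" where
  "vertex_deviation VT ET v = (1 / real (card VT)) * (\<Sum>u\<in>VT. real (gdist ET v u))"

definition centroid :: "'a set \<Rightarrow> 'a set set \<Rightarrow> 'a \<Rightarrow> bool" where
  "centroid VT ET v \<longleftrightarrow> v \<in> VT \<and>
     (\<forall>w\<in>VT. vertex_deviation VT ET v \<le> vertex_deviation VT ET w)"

end

theory Submission
  imports Defs
begin

text \<open>A BFS-tree \<open>T_w\<close> with root \<open>w\<close> contains a shortest path of the graph from \<open>w\<close> to every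
  vertex, and deleting edges cannot shorten distances. Hence for every vertex \<open>w\<close>
  \<open>S_d(T_m) \<le> S_d(T_w) \<le> \<Sum>\<^sub>x d(w, x) \<le> \<Sum>\<^sub>x d_T_m(w, x)\<close>,
  and the right-hand side is \<open>|V|\<close> times the vertex deviation of \<open>w\<close> in \<open>T_m\<close>.
  The shortest-path property of BFS comes from the usual queue invariant: the queue is sorted
  by distance from the root, spans at most two consecutive levels, and every vertex strictly
  closer than the head of the queue has already been visited and dequeued.\<close>

lemma walk_Cons: "walk E (x # xs) \<longleftrightarrow> xs = [] \<or> {x, hd xs} \<in> E \<and> walk E xs"
  by (cases xs) auto

lemma walk_snoc: "walk E (xs @ [y]) \<longleftrightarrow> xs = [] \<or> walk E xs \<and> {last xs, y} \<in> E"
  by (induction xs) (auto simp: walk_Cons hd_append)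

lemma walk_append: "walk E (xs @ y # ys) \<longleftrightarrow> walk E (xs @ [y]) \<and> walk E (y # ys)"
  by (induction xs) (auto simp: walk_Cons hd_append)

lemma walk_rev: "walk E xs \<Longrightarrow> walk E (rev xs)"
proof (induction E xs rule: walk.induct)
  case (3 E x y xs)
  then show ?case using walk_snoc[of E "rev (y # xs)" x] by (auto simp: insert_commute)
qed auto

lemma walk_mono: "walk E xs \<Longrightarrow> E \<subseteq> F \<Longrightarrow> walk F xs"
  by (induction E xs rule: walk.induct) auto

lemma last_walk_in_closed:
  "walk E xs \<Longrightarrow> hd xs \<in> S \<Longrightarrow> (\<And>y z. y \<in> S \<Longrightarrow> {y, z} \<in> E \<Longrightarrow> z \<in> S) \<Longrightarrow> last xs \<in> S"
  by (induction E xs rule: walk.induct) auto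

text \<open>Since \<^const>\<open>gdist\<close> is a \<open>LEAST\<close> over a possibly empty set (junk value \<open>0\<close> between
  disconnected vertices), all distance facts below carry an explicit witness walk.\<close>
definition walk_betw :: "'a set set \<Rightarrow> 'a \<Rightarrow> 'a \<Rightarrow> nat \<Rightarrow> bool" where
  "walk_betw E a x n \<longleftrightarrow> (\<exists>xs. walk E xs \<and> hd xs = a \<and> last xs = x \<and> length xs = Suc n)"

lemma gdist_eq_Least: "gdist E a x = (LEAST n. walk_betw E a x n)"
  unfolding gdist_def walk_betw_def by simp

lemma gdist_le: "walk_betw E a x n \<Longrightarrow> gdist E a x \<le> n"
  unfolding gdist_eq_Least by (rule Least_le)

lemma walk_betw_gdist: "walk_betw E a x n \<Longrightarrow> walk_betw E a x (gdist E a x)"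
  unfolding gdist_eq_Least by (rule LeastI)

lemma walk_betw_refl: "walk_betw E a a 0"
  unfolding walk_betw_def by (intro exI[of _ "[a]"]) auto

lemma walk_betw_mono: "walk_betw E a x n \<Longrightarrow> E \<subseteq> F \<Longrightarrow> walk_betw F a x n"
  unfolding walk_betw_def using walk_mono by blast

lemma walk_betw_snoc:
  assumes "walk_betw E a x n" "{x, y} \<in> E"
  shows "walk_betw E a y (Suc n)"
proof -
  obtain xs where "walk E xs" "hd xs = a" "last xs = x" "length xs = Suc n"
    using assms(1) unfolding walk_betw_def by blast
  then show ?thesis unfolding walk_betw_def
    using assms(2) by (intro exI[of _ "xs @ [y]"]) (auto simp: walk_snoc hd_append)
qed

lemma walk_betw_sym:
  assumes "walk_betw E a x n"
  shows "walk_betw E x a n"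
proof -
  obtain xs where "walk E xs" "hd xs = a" "last xs = x" "length xs = Suc n"
    using assms unfolding walk_betw_def by blast
  then show ?thesis unfolding walk_betw_def
    using walk_rev[of E xs] by (intro exI[of _ "rev xs"]) (simp add: hd_rev last_rev)
qed

lemma walk_betw_trans:
  assumes "walk_betw E a b n" "walk_betw E b c m"
  shows "walk_betw E a c (n + m)"
proof -
  obtain xs where xs: "walk E xs" "hd xs = a" "last xs = b" "length xs = Suc n"
    using assms(1) unfolding walk_betw_def by blast
  obtain ys where ys: "walk E ys" "hd ys = b" "last ys = c" "length ys = Suc m"
    using assms(2) unfolding walk_betw_def by blast
  obtain xs' where xs': "xs = xs' @ [b]" using xs(3,4) by (cases xs rule: rev_cases) auto
  obtain ys' where ys': "ys = b # ys'" using ys(2,4) by (cases ys) auto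
  have "walk E (xs' @ b # ys')" using xs(1) ys(1) walk_append[of E xs' b ys'] unfolding xs' ys' by blast
  moreover have "hd (xs' @ b # ys') = a" using xs(2) unfolding xs' by (cases xs') simp_all
  moreover have "last (xs' @ b # ys') = c" using ys(3) unfolding ys' by simp
  moreover have "length (xs' @ b # ys') = Suc (n + m)" using xs(4) ys(4) unfolding xs' ys' by simp
  ultimately show ?thesis unfolding walk_betw_def by blast
qed

lemma gdist_edge_le:
  assumes "walk_betw E a x n" "{x, y} \<in> E"
  shows "gdist E a y \<le> gdist E a x + 1"
  using walk_betw_snoc[OF walk_betw_gdist[OF assms(1)] assms(2)] gdist_le by fastforce

lemma gdist_eq_0:
  assumes "walk_betw E a x n" "gdist E a x = 0"
  shows "x = a"
proof -
  obtain xs where "walk E xs" "hd xs = a" "last xs = x" "length xs = 1"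
    using walk_betw_gdist[OF assms(1)] assms(2) unfolding walk_betw_def by auto
  then show ?thesis by (cases xs) auto
qed

lemma gdist_predecessor:
  assumes "walk_betw E a y n" "0 < gdist E a y"
  obtains p where "{p, y} \<in> E" "walk_betw E a p (gdist E a y - 1)" "gdist E a p < gdist E a y"
proof -
  obtain xs where xs: "walk E xs" "hd xs = a" "last xs = y" "length xs = Suc (gdist E a y)"
    using walk_betw_gdist[OF assms(1)] unfolding walk_betw_def by blast
  obtain ys where ys: "xs = ys @ [y]" using xs(3,4) by (cases xs rule: rev_cases) auto
  then have "ys \<noteq> []" using xs(4) assms(2) by auto
  then have "{last ys, y} \<in> E" "walk E ys" using xs(1) unfolding ys by (simp_all add: walk_snoc)
  moreover have "walk_betw E a (last ys) (gdist E a y - 1)"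
    unfolding walk_betw_def using \<open>ys \<noteq> []\<close> xs(2,4) \<open>walk E ys\<close> assms(2) unfolding ys
    by (intro exI[of _ ys]) auto
  moreover from this have "gdist E a (last ys) < gdist E a y"
    using gdist_le[of E a "last ys"] assms(2) by fastforce
  ultimately show ?thesis using that by blast
qed

lemma gdist_le_gdist_subgraph:
  assumes "T \<subseteq> E" "walk_betw T a x n"
  shows "gdist E a x \<le> gdist T a x"
  using walk_betw_mono[OF walk_betw_gdist[OF assms(2)] assms(1)] by (rule gdist_le)

lemma sorted_map_append_next_level:
  fixes f :: "'a \<Rightarrow> 'b::linordered_semidom"
  assumes "sorted (map f (u # q))" "\<forall>x\<in>set q. f x \<le> f u + 1" "\<forall>w\<in>set ns. f w = f u + 1"
  shows "sorted (map f (q @ ns))"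
proof -
  have "sorted (map f ns)" using assms(3) by (induction ns) auto
  then show ?thesis using assms by (auto simp: sorted_append)
qed

lemma sorted_map_hd_le: "sorted (map f xs) \<Longrightarrow> x \<in> set xs \<Longrightarrow> f (hd xs) \<le> f x"
  by (cases xs) auto

definition bfs_invariant :: "'a set set \<Rightarrow> 'a \<Rightarrow> 'a list \<Rightarrow> 'a set \<Rightarrow> 'a set set \<Rightarrow> bool" where
  "bfs_invariant E v q vis T \<longleftrightarrow>
     v \<in> vis \<and> set q \<subseteq> vis \<and> T \<subseteq> E \<and>
     (\<forall>x\<in>vis. walk_betw T v x (gdist E v x)) \<and>
     (\<forall>y\<in>vis - set q. \<forall>z. {y, z} \<in> E \<longrightarrow> z \<in> vis) \<and>
     sorted (map (gdist E v) q) \<and> (\<forall>x\<in>set q. gdist E v x \<le> gdist E v (hd q) + 1) \<and>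
     (\<forall>x n. walk_betw E v x n \<longrightarrow> q \<noteq> [] \<longrightarrow> gdist E v x < gdist E v (hd q) \<longrightarrow> x \<in> vis - set q)"

lemma bfs_invariant_init: "bfs_invariant E v [v] {v} {}"
  using gdist_le[OF walk_betw_refl[of E v]] walk_betw_refl[of "{}" v]
  unfolding bfs_invariant_def by auto

lemma bfs_invariant_ConsD:
  assumes "bfs_invariant E v (u # q) vis T"
  shows "v \<in> vis" "u \<in> vis" "set q \<subseteq> vis" "T \<subseteq> E"
    and "\<forall>x\<in>vis. walk_betw T v x (gdist E v x)"
    and "\<forall>y\<in>vis - set (u # q). \<forall>z. {y, z} \<in> E \<longrightarrow> z \<in> vis"
    and "sorted (map (gdist E v) (u # q))" "\<forall>x\<in>set q. gdist E v x \<le> gdist E v u + 1"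
    and "\<And>x n. walk_betw E v x n \<Longrightarrow> gdist E v x < gdist E v u \<Longrightarrow> x \<in> vis - set (u # q)"
  using assms list.distinct unfolding bfs_invariant_def list.sel(1) list.set(2) by blast+

lemma bfs_invariant_visited_upto_head:
  assumes inv: "bfs_invariant E v (u # q) vis T"
    and x: "walk_betw E v x n" "gdist E v x \<le> gdist E v u"
  shows "x \<in> vis"
proof (cases "gdist E v x = 0")
  case True
  then show ?thesis using bfs_invariant_ConsD(1)[OF inv] gdist_eq_0[OF x(1)] by simp
next
  case False
  then have "0 < gdist E v x" by simp
  then obtain p where p: "{p, x} \<in> E" "walk_betw E v p (gdist E v x - 1)" "gdist E v p < gdist E v x"
    by (rule gdist_predecessor[OF x(1)])
  have "gdist E v p < gdist E v u" using p(3) x(2) by linarith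
  then have "p \<in> vis - set (u # q)" by (rule bfs_invariant_ConsD(9)[OF inv p(2)])
  then show ?thesis using bfs_invariant_ConsD(6)[OF inv] p(1) by blast
qed

lemma bfs_invariant_discovered_level:
  assumes inv: "bfs_invariant E v (u # q) vis T" and w: "{u, w} \<in> E" "w \<notin> vis"
  shows "gdist E v w = gdist E v u + 1"
proof -
  have "walk_betw T v u (gdist E v u)"
    using bfs_invariant_ConsD(2,5)[OF inv] by blast
  then have "walk_betw E v u (gdist E v u)"
    using bfs_invariant_ConsD(4)[OF inv] by (rule walk_betw_mono)
  then have "gdist E v w \<le> gdist E v u + 1" "walk_betw E v w (Suc (gdist E v u))"
    using gdist_edge_le[OF _ w(1)] walk_betw_snoc[OF _ w(1)] by simp_all
  moreover have "\<not> gdist E v w \<le> gdist E v u"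
    using bfs_invariant_visited_upto_head[OF inv calculation(2)] w(2) by blast
  ultimately show ?thesis by linarith
qed

lemma bfs_invariant_step_tree:
  assumes inv: "bfs_invariant E v (u # q) vis T"
    and ns: "set ns = {w. {u, w} \<in> E \<and> w \<notin> vis}"
  shows "\<forall>x\<in>vis \<union> set ns. walk_betw (T \<union> (\<lambda>w. {u, w}) ` set ns) v x (gdist E v x)"
proof
  let ?T' = "T \<union> (\<lambda>w. {u, w}) ` set ns"
  fix x assume x: "x \<in> vis \<union> set ns"
  have T'_vis: "walk_betw ?T' v y (gdist E v y)" if "y \<in> vis" for y
    using walk_betw_mono[OF bfs_invariant_ConsD(5)[OF inv, rule_format, OF that] Un_upper1] .
  show "walk_betw ?T' v x (gdist E v x)"
  proof (cases "x \<in> vis")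
    case False
    then have "x \<in> set ns" using x by blast
    then have "{u, x} \<in> ?T'" "gdist E v x = Suc (gdist E v u)"
      using bfs_invariant_discovered_level[OF inv] ns by auto
    then show ?thesis using walk_betw_snoc[OF T'_vis[OF bfs_invariant_ConsD(2)[OF inv]]] by simp
  qed (rule T'_vis)
qed

lemma bfs_invariant_step_closed:
  assumes inv: "bfs_invariant E v (u # q) vis T"
    and ns: "set ns = {w. {u, w} \<in> E \<and> w \<notin> vis}"
  shows "\<forall>y\<in>vis \<union> set ns - set (q @ ns). \<forall>z. {y, z} \<in> E \<longrightarrow> z \<in> vis \<union> set ns"
proof (intro ballI allI impI)
  fix y z assume y: "y \<in> vis \<union> set ns - set (q @ ns)" and e: "{y, z} \<in> E"
  show "z \<in> vis \<union> set ns"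
  proof (cases "y = u")
    case True
    then show ?thesis using e unfolding ns by blast
  next
    case False
    then have "y \<in> vis - set (u # q)" using y by auto
    then show ?thesis using bfs_invariant_ConsD(6)[OF inv] e by blast
  qed
qed

lemma bfs_invariant_step:
  assumes inv: "bfs_invariant E v (u # q) vis T"
    and ns: "set ns = {w. {u, w} \<in> E \<and> w \<notin> vis}"
  shows "bfs_invariant E v (q @ ns) (vis \<union> set ns) (T \<union> (\<lambda>w. {u, w}) ` set ns)"
proof -
  let ?d = "gdist E v"
  note sorted = bfs_invariant_ConsD(7)[OF inv] and near = bfs_invariant_ConsD(8)[OF inv]
  have new: "{u, w} \<in> E" "w \<notin> vis" if "w \<in> set ns" for w
    using that ns by auto
  have next_level: "\<forall>w\<in>set ns. ?d w = ?d u + 1"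
    using bfs_invariant_discovered_level[OF inv new] by blast
  have sorted': "sorted (map ?d (q @ ns))"
    by (rule sorted_map_append_next_level[OF sorted near next_level])
  have levels: "?d u \<le> ?d x \<and> ?d x \<le> ?d u + 1" if "x \<in> set (q @ ns)" for x
    using that sorted near next_level by auto
  have near': "\<forall>x\<in>set (q @ ns). ?d x \<le> ?d (hd (q @ ns)) + 1"
    using levels levels[OF hd_in_set] by fastforce
  have finished': "\<forall>x n. walk_betw E v x n \<longrightarrow> q @ ns \<noteq> [] \<longrightarrow>
      ?d x < ?d (hd (q @ ns)) \<longrightarrow> x \<in> vis \<union> set ns - set (q @ ns)"
  proof (intro allI impI)
    fix x n assume x: "walk_betw E v x n" and ne: "q @ ns \<noteq> []" and lt: "?d x < ?d (hd (q @ ns))"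
    then have "?d x \<le> ?d u" using levels[OF hd_in_set[OF ne]] by linarith
    then have "x \<in> vis" by (rule bfs_invariant_visited_upto_head[OF inv x])
    moreover have "x \<notin> set (q @ ns)" using sorted_map_hd_le[OF sorted'] lt by fastforce
    ultimately show "x \<in> vis \<union> set ns - set (q @ ns)" by blast
  qed
  have "v \<in> vis \<union> set ns" "set (q @ ns) \<subseteq> vis \<union> set ns" "T \<union> (\<lambda>w. {u, w}) ` set ns \<subseteq> E"
    using bfs_invariant_ConsD(1-4)[OF inv] new by auto
  then show ?thesis
    using bfs_invariant_step_tree[OF inv ns] bfs_invariant_step_closed[OF inv ns] sorted' near' finished'
    unfolding bfs_invariant_def by blast
qed

lemma bfs_run_shortest_paths:
  "bfs_run E q vis T T' \<Longrightarrow> bfs_invariant E v q vis T \<Longrightarrow>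
     T' \<subseteq> E \<and> (\<forall>x n. walk_betw E v x n \<longrightarrow> walk_betw T' v x (gdist E v x))"
proof (induction rule: bfs_run.induct)
  case (finish vis T)
  have "v \<in> vis" and closed: "\<forall>y\<in>vis. \<forall>z. {y, z} \<in> E \<longrightarrow> z \<in> vis"
    and "T \<subseteq> E" and tree: "\<forall>x\<in>vis. walk_betw T v x (gdist E v x)"
    using finish unfolding bfs_invariant_def by auto
  have "x \<in> vis" if x: "walk_betw E v x n" for x n
  proof -
    obtain xs where "walk E xs" "hd xs = v" "last xs = x" using x unfolding walk_betw_def by blast
    then show ?thesis using last_walk_in_closed[of E xs vis] \<open>v \<in> vis\<close> closed by blast
  qed
  then show ?case using \<open>T \<subseteq> E\<close> tree by blast
next
  case (step ns u vis q T T')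
  show ?case using bfs_invariant_step[OF step.prems step.hyps(1)] by (rule step.IH)
qed

lemma bfs_tree_shortest_paths:
  assumes "bfs_tree V E v T" "connected_graph V E"
  shows "T \<subseteq> E \<and> (\<forall>x\<in>V. walk_betw T v x (gdist E v x))"
proof -
  have "v \<in> V" and run: "bfs_run E [v] {v} {} T" using assms(1) unfolding bfs_tree_def by blast+
  have "\<exists>n. walk_betw E v x n" if x: "x \<in> V" for x
  proof -
    obtain xs where "walk E xs" "hd xs = v" "last xs = x"
      using assms(2)[unfolded connected_graph_def, rule_format, OF \<open>v \<in> V\<close> x] by blast
    moreover have "xs \<noteq> []" using \<open>walk E xs\<close> by (cases xs) auto
    ultimately show ?thesis unfolding walk_betw_def by (intro exI[of _ "length xs - 1"]) auto
  qed
  then show ?thesis using bfs_run_shortest_paths[OF run bfs_invariant_init] by blast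
qed

lemma Sd_bfs_tree_le_sum_gdist:
  assumes "bfs_tree V E w T" "connected_graph V E"
  shows "Sd V T w \<le> (\<Sum>x\<in>V. gdist E w x)"
proof -
  have "\<forall>x\<in>V. walk_betw T w x (gdist E w x)" using bfs_tree_shortest_paths[OF assms] by blast
  then show ?thesis unfolding Sd_def by (auto intro!: sum_mono gdist_le)
qed

lemma sum_gdist_le_Sd_spanning_subgraph:
  assumes "T \<subseteq> E" "\<forall>x\<in>V. \<exists>n. walk_betw T r x n" "w \<in> V"
  shows "(\<Sum>x\<in>V. gdist E w x) \<le> Sd V T w"
  unfolding Sd_def
proof (rule sum_mono)
  fix x assume "x \<in> V"
  then obtain n m where "walk_betw T r w n" "walk_betw T r x m" using assms(2,3) by blast
  then have "walk_betw T w x (n + m)" by (rule walk_betw_trans[OF walk_betw_sym])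
  then show "gdist E w x \<le> gdist T w x" by (rule gdist_le_gdist_subgraph[OF assms(1)])
qed

lemma centroid_if_Sd_le:
  assumes "r \<in> VT" "\<forall>w\<in>VT. Sd VT ET r \<le> Sd VT ET w"
  shows "centroid VT ET r"
  unfolding centroid_def vertex_deviation_def
proof (intro conjI ballI assms(1))
  fix w assume "w \<in> VT"
  then have "(\<Sum>u\<in>VT. real (gdist ET r u)) \<le> (\<Sum>u\<in>VT. real (gdist ET w u))"
    using assms(2) unfolding Sd_def by (simp flip: of_nat_sum)
  then show "1 / real (card VT) * (\<Sum>u\<in>VT. real (gdist ET r u))
      \<le> 1 / real (card VT) * (\<Sum>u\<in>VT. real (gdist ET w u))"
    by (rule mult_left_mono) simp
qed

theorem lemma5p14:
  fixes V :: "'a set" and E :: "'a set set" and bfs :: "'a \<Rightarrow> 'a set set" and r :: 'a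
  assumes "simple_graph V E"
    and "connected_graph V E"
    and "\<forall>v\<in>V. bfs_tree V E v (bfs v)"
    and "r \<in> V"
    and "\<forall>v\<in>V. Sd V (bfs r) r \<le> Sd V (bfs v) v"
  shows "centroid V (bfs r) r"
proof -
  have tree: "bfs r \<subseteq> E \<and> (\<forall>x\<in>V. walk_betw (bfs r) r x (gdist E r x))"
    by (rule bfs_tree_shortest_paths[OF assms(3)[rule_format, OF assms(4)] assms(2)])
  then have spanning: "\<forall>x\<in>V. \<exists>n. walk_betw (bfs r) r x n" by blast
  have "Sd V (bfs r) r \<le> Sd V (bfs r) w" if "w \<in> V" for w
  proof -
    have "Sd V (bfs r) r \<le> Sd V (bfs w) w" using assms(5) that by blast
    also have "\<dots> \<le> (\<Sum>x\<in>V. gdist E w x)"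
      by (rule Sd_bfs_tree_le_sum_gdist[OF assms(3)[rule_format, OF that] assms(2)])
    also have "\<dots> \<le> Sd V (bfs r) w"
      using tree spanning that by (intro sum_gdist_le_Sd_spanning_subgraph) blast+
    finally show ?thesis .
  qed
  then show ?thesis by (intro centroid_if_Sd_le assms(4)) blast
qed

end
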